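(* Let $n\ge1$, let $\mu,\nu\in\mathbb{R}^n$ be probability vectors, let $\gamma>0$, let $\phi$ satisfy the Bregman assumption in the context with $\phi'_0=-\infty$, let $\mathcal{C}\subseteq\mathbb{R}^{n\times n}$ be a nonempty closed convex set, and let $\hat X\in\mathcal{T}_\phi(\mu,\nu)$. Consider the bilevel problem $$(\mathrm{P}_1)\qquad \inf_{C\in\mathcal{C}} B_\phi(\hat X\,\|\,\mathcal{F}(C))$$ and the single-level problem $$(\mathrm{P}_2)\qquad \inf_{C\in\mathcal{C},\,u,v\in\mathbb{R}^n} E(u,v,C):=\psi\Big(\frac{u\oplus v-C}{\gamma}\Big)-\Big\langle\frac{u\oplus v-C}{\gamma},\hat X\Big\rangle.$$ Then $(\mathrm{P}_1)$ has an optimal solution if and only if $(\mathrm{P}_2)$ has one. Moreover, when both have optimal solutions, $C^*$ solves $(\mathrm{P}_1)$ if and only if $(u^{C^*},v^{C^*},C^* )$ solves $(\mathrm{P}_2)$, where $(u^{C^*},v^{C^*})$ is an optimal dual pair for the forward problem with cost $C^*$, i.e. $u^{C^*},v^{C^*}\in\mathbb{R}^n$ satisfy $\mathcal{F}(C^* )=\psi'\big((u^{C^*}\oplus v^{C^*}-C^* )/\gamma\big)$ entrywise.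
   Context: Probability vectors have nonnegative entries summing to $1$. $\mathcal{U}(\mu,\nu):=\{X\in\mathbb{R}_+^{n\times n}: X\mathbf{1}=\mu,\ X^\top\mathbf{1}=\nu\}$. Bregman assumption on $\phi:\mathbb{R}\to(-\infty,+\infty]$: $I=\operatorname{dom}\phi$ is an interval with $(0,1)\subseteq\operatorname{int}(I)$; $\phi$ is of Legendre type (proper, closed, strictly convex on $\operatorname{int}(\operatorname{dom}\phi)$, essentially smooth); $\phi$ is $C^1$ on $\operatorname{int}(I)$. $\phi(X):=\sum_{i,j}\phi(X_{ij})$. $\mathcal{F}(C):=\arg\min_{X\in\mathcal{U}(\mu,\nu)}\{\langle C,X\rangle+\gamma\phi(X)\}$. $\phi'_0:=\lim_{x\to0^+}\phi'(x)$, $\phi'_1:=\lim_{x\to1^-}\phi'(x)$. With $\phi'_0=-\infty$: $\mathcal{T}_\phi(\mu,\nu):=\mathcal{U}(\mu,\nu)\cap(0,1]^{n\times n}$ if $\phi'_1$ is finite and $\mathcal{U}(\mu,\nu)\cap(0,1)^{n\times n}$ if $\phi'_1=+\infty$. $\psi:=\phi^*$ is the Fenchel conjugate of $\phi$; for a matrix $Z$, $\psi(Z):=\sum_{i,j}\psi(Z_{ij})$ and $\psi'(Z)$ is entrywise. The Bregman divergence is $B_\phi(x\|y):=\phi(x)-\phi(y)-(x-y)\phi'(y)$, extended to matrices by summing over entries. $(u\oplus v)_{ij}:=u_i+v_j$. *)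

theory Defs
  imports "HOL-Analysis.Analysis"
begin

text \<open>Index type 'n (finite, nonempty): vectors real^'n, matrices real^'n^'n.
  The extended-valued function phi : R -> (-inf,+inf] is modelled as real => ereal.\<close>

definition prob_vec :: "real^'n \<Rightarrow> bool" where
  "prob_vec p \<longleftrightarrow> (\<forall>i. p$i \<ge> 0) \<and> (\<Sum>i\<in>UNIV. p$i) = 1"

definition transport_polytope :: "real^'n \<Rightarrow> real^'n \<Rightarrow> (real^'n^'n) set" where
  "transport_polytope \<mu> \<nu> = {X. (\<forall>i j. X$i$j \<ge> 0) \<and> (\<forall>i. (\<Sum>j\<in>UNIV. X$i$j) = \<mu>$i)
                                 \<and> (\<forall>j. (\<Sum>i\<in>UNIV. X$i$j) = \<nu>$j)}"

definition strictly_convex_on :: "real set \<Rightarrow> (real \<Rightarrow> real) \<Rightarrow> bool" where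
  "strictly_convex_on S f \<longleftrightarrow> (\<forall>x\<in>S. \<forall>y\<in>S. \<forall>t. x \<noteq> y \<and> 0 < t \<and> t < 1 \<longrightarrow>
      f ((1 - t) * x + t * y) < (1 - t) * f x + t * f y)"

definition edom :: "(real \<Rightarrow> ereal) \<Rightarrow> real set" where
  "edom f = {x. f x \<noteq> \<infinity>}"

text \<open>Bregman assumption: dom phi an interval with (0,1) in its interior; phi of Legendre
  type (proper, closed, convex, strictly convex on int dom, essentially smooth); phi C^1 on
  int dom with derivative dphi.\<close>
definition bregman_assumption :: "(real \<Rightarrow> ereal) \<Rightarrow> (real \<Rightarrow> real) \<Rightarrow> bool" where
  "bregman_assumption phi dphi \<longleftrightarrow>
     is_interval (edom phi) \<and> {0<..<1} \<subseteq> interior (edom phi) \<and>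
     (\<forall>x. phi x \<noteq> -\<infinity>) \<and>
     (\<forall>c. closed {x. phi x \<le> ereal c}) \<and>
     convex_on (edom phi) (\<lambda>x. real_of_ereal (phi x)) \<and>
     strictly_convex_on (interior (edom phi)) (\<lambda>x. real_of_ereal (phi x)) \<and>
     (\<forall>x\<in>interior (edom phi). ((\<lambda>y. real_of_ereal (phi y)) has_real_derivative dphi x) (at x)) \<and>
     continuous_on (interior (edom phi)) dphi \<and>
     (\<forall>b\<in>frontier (interior (edom phi)).
        filterlim (\<lambda>x. \<bar>dphi x\<bar>) at_top (at b within interior (edom phi)))"

definition dphi0_neg_inf :: "(real \<Rightarrow> real) \<Rightarrow> bool" where
  "dphi0_neg_inf dphi \<longleftrightarrow> filterlim dphi at_bot (at_right 0)"

definition dphi1_finite :: "(real \<Rightarrow> real) \<Rightarrow> bool" where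
  "dphi1_finite dphi \<longleftrightarrow> (\<exists>L. (dphi \<longlongrightarrow> L) (at_left 1))"

definition T_phi :: "(real \<Rightarrow> real) \<Rightarrow> real^'n \<Rightarrow> real^'n \<Rightarrow> (real^'n^'n) set" where
  "T_phi dphi \<mu> \<nu> = transport_polytope \<mu> \<nu> \<inter>
     {X. \<forall>i j. 0 < X$i$j \<and> (if dphi1_finite dphi then X$i$j \<le> 1 else X$i$j < 1)}"

definition mat_sum :: "(real \<Rightarrow> ereal) \<Rightarrow> real^'n^'n \<Rightarrow> ereal" where
  "mat_sum f X = (\<Sum>i\<in>UNIV. \<Sum>j\<in>UNIV. f (X$i$j))"

definition forward :: "(real \<Rightarrow> ereal) \<Rightarrow> real \<Rightarrow> real^'n \<Rightarrow> real^'n \<Rightarrow> real^'n^'n \<Rightarrow> real^'n^'n" where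
  "forward phi \<gamma> \<mu> \<nu> C = (THE X. X \<in> transport_polytope \<mu> \<nu> \<and>
      (\<forall>Y\<in>transport_polytope \<mu> \<nu>. ereal (inner C X) + ereal \<gamma> * mat_sum phi X
                                  \<le> ereal (inner C Y) + ereal \<gamma> * mat_sum phi Y))"

definition fconj :: "(real \<Rightarrow> ereal) \<Rightarrow> real \<Rightarrow> ereal" where
  "fconj phi y = (SUP x. ereal (x * y) - phi x)"

definition bregman_div :: "(real \<Rightarrow> ereal) \<Rightarrow> (real \<Rightarrow> real) \<Rightarrow> real \<Rightarrow> real \<Rightarrow> ereal" where
  "bregman_div phi dphi x y = phi x - phi y - ereal ((x - y) * dphi y)"

definition bregman_div_mat :: "(real \<Rightarrow> ereal) \<Rightarrow> (real \<Rightarrow> real) \<Rightarrow> real^'n^'n \<Rightarrow> real^'n^'n \<Rightarrow> ereal" where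
  "bregman_div_mat phi dphi X Y = (\<Sum>i\<in>UNIV. \<Sum>j\<in>UNIV. bregman_div phi dphi (X$i$j) (Y$i$j))"

definition oplus :: "real^'n \<Rightarrow> real^'n \<Rightarrow> real^'n^'n" where
  "oplus u v = (\<chi> i j. u$i + v$j)"

definition E_obj :: "(real \<Rightarrow> ereal) \<Rightarrow> real \<Rightarrow> real^'n^'n \<Rightarrow> real^'n \<Rightarrow> real^'n \<Rightarrow> real^'n^'n \<Rightarrow> ereal" where
  "E_obj phi \<gamma> Xh u v C =
     mat_sum (fconj phi) ((1 / \<gamma>) *\<^sub>R (oplus u v - C)) - ereal (inner ((1 / \<gamma>) *\<^sub>R (oplus u v - C)) Xh)"

definition solves_P1 :: "(real \<Rightarrow> ereal) \<Rightarrow> (real \<Rightarrow> real) \<Rightarrow> real \<Rightarrow> real^'n \<Rightarrow> real^'n \<Rightarrow>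
    (real^'n^'n) set \<Rightarrow> real^'n^'n \<Rightarrow> real^'n^'n \<Rightarrow> bool" where
  "solves_P1 phi dphi \<gamma> \<mu> \<nu> \<C> Xh C \<longleftrightarrow> C \<in> \<C> \<and>
     (\<forall>C'\<in>\<C>. bregman_div_mat phi dphi Xh (forward phi \<gamma> \<mu> \<nu> C)
               \<le> bregman_div_mat phi dphi Xh (forward phi \<gamma> \<mu> \<nu> C'))"

definition solves_P2 :: "(real \<Rightarrow> ereal) \<Rightarrow> real \<Rightarrow> (real^'n^'n) set \<Rightarrow> real^'n^'n \<Rightarrow>
    real^'n \<Rightarrow> real^'n \<Rightarrow> real^'n^'n \<Rightarrow> bool" where
  "solves_P2 phi \<gamma> \<C> Xh u v C \<longleftrightarrow> C \<in> \<C> \<and>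
     (\<forall>C'\<in>\<C>. \<forall>u' v'. E_obj phi \<gamma> Xh u v C \<le> E_obj phi \<gamma> Xh u' v' C')"

definition dual_pair :: "(real \<Rightarrow> ereal) \<Rightarrow> real \<Rightarrow> real^'n \<Rightarrow> real^'n \<Rightarrow> real^'n^'n \<Rightarrow>
    real^'n \<Rightarrow> real^'n \<Rightarrow> bool" where
  "dual_pair phi \<gamma> \<mu> \<nu> C u v \<longleftrightarrow>
     (\<forall>i j. let z = (u$i + v$j - C$i$j) / \<gamma> in
        z \<in> interior (edom (fconj phi)) \<and>
        ((\<lambda>y. real_of_ereal (fconj phi y)) has_real_derivative (forward phi \<gamma> \<mu> \<nu> C)$i$j) (at z))"

end

theory Submission
  imports Defs
begin

(* For every cost C the forward problem has a unique minimiser F(C), and all its entries are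
   positive: since phi'(0+) = -infinity, a minimiser of the cost over the truncated polytope
   {X in U(mu,nu). X >= delta} cannot touch the floor when delta is small (moving towards X-hat
   would decrease the cost), and by convexity it is then a global minimiser.  Stationarity along the
   directions with zero margins gives phi'(F(C)) = (u + v - C)/gamma, and Legendre duality turns
   (u,v) into a dual pair, at which psi((u+v-C)/gamma) = F(C) (u+v-C)/gamma - phi(F(C))
   entrywise.  As u + v is orthogonal to X-hat - F(C), Fenchel-Young yields
   E(u,v,C) >= L(C) := <C, X-hat - F(C)>/gamma - phi(F(C)) for all u, v, with equality at dual
   pairs, and also B_phi(X-hat || F(C)) = phi(X-hat) + L(C).  So (P1) and (P2) both amount to
   minimising L over the cost set. *)

lemma strictly_convex_onD:
  assumes "strictly_convex_on S f" "x \<in> S" "y \<in> S" "x \<noteq> y" "0 < t" "t < 1"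
  shows "f ((1 - t) * x + t * y) < (1 - t) * f x + t * f y"
  using assms unfolding strictly_convex_on_def by blast

lemma inner_matrix: "inner (A::real^'n^'m) B = (\<Sum>i\<in>UNIV. \<Sum>j\<in>UNIV. A$i$j * B$i$j)"
  by (simp add: inner_vec_def)

lemma sum_le_sum_plus_one_excess:
  fixes t b :: "'a::finite \<Rightarrow> real"
  assumes "\<And>k. t k \<le> b k" and "t i \<le> b i + c"
  shows "(\<Sum>k\<in>UNIV. t k) \<le> (\<Sum>k\<in>UNIV. b k) + c"
proof -
  have "(\<Sum>k\<in>UNIV - {i}. t k) \<le> (\<Sum>k\<in>UNIV - {i}. b k)"
    using assms(1) by (rule sum_mono)
  then show ?thesis
    using assms(2) by (simp add: sum.remove[of UNIV i t] sum.remove[of UNIV i b])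
qed

lemma mult_le_abs_if_abs_le_1:
  fixes x y :: real
  assumes "\<bar>y\<bar> \<le> 1" shows "x * y \<le> \<bar>x\<bar>"
proof -
  have "x * y \<le> \<bar>x\<bar> * \<bar>y\<bar>" using abs_ge_self[of "x * y"] by (simp add: abs_mult)
  also have "\<dots> \<le> \<bar>x\<bar>" using assms by (simp add: mult_left_le)
  finally show ?thesis .
qed

lemma positive_lower_bound:
  fixes f :: "'a::finite \<Rightarrow> 'b::finite \<Rightarrow> real"
  assumes "\<And>i j. 0 < f i j"
  obtains p where "0 < p" "\<And>i j. p \<le> f i j"
proof
  let ?S = "range (case_prod f)"
  show "0 < Min ?S" using assms Min_in[of ?S] by auto
  show "Min ?S \<le> f i j" for i j
    using range_eqI[of "f i j" "case_prod f" "(i, j)"] by (intro Min_le) auto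
qed

lemma oplus_if_orthogonal_to_zero_margins:
  fixes W :: "'n::finite \<Rightarrow> 'm::finite \<Rightarrow> real"
  assumes orth: "\<And>D. (\<forall>k. (\<Sum>l\<in>UNIV. D k l) = 0) \<Longrightarrow> (\<forall>l. (\<Sum>k\<in>UNIV. D k l) = 0) \<Longrightarrow>
                      (\<Sum>k\<in>UNIV. \<Sum>l\<in>UNIV. W k l * D k l) = 0"
  shows "\<exists>a b. \<forall>i j. W i j = a i + b j"
proof -
  fix i0 j0
  have "W i j = W i j0 + (W i0 j - W i0 j0)" for i j
  proof -
    \<comment> \<open>test against the zero-margin matrix (e_i - e_i0)(e_j - e_j0)^T\<close>
    define e :: "'n \<Rightarrow> real" where "e k = of_bool (k = i) - of_bool (k = i0)" for k
    define f :: "'m \<Rightarrow> real" where "f l = of_bool (l = j) - of_bool (l = j0)" for l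
    have "(\<Sum>k\<in>UNIV. \<Sum>l\<in>UNIV. W k l * (e k * f l)) = 0"
      by (rule orth) (simp_all add: e_def f_def sum_subtractf flip: sum_distrib_left sum_distrib_right)
    moreover have "(\<Sum>l\<in>UNIV. W k l * (e k * f l)) = e k * (W k j - W k j0)" for k
      by (simp add: f_def algebra_simps sum_subtractf flip: sum_distrib_left)
    moreover have "(\<Sum>k\<in>UNIV. e k * (W k j - W k j0)) = W i j - W i j0 - (W i0 j - W i0 j0)"
      by (simp add: e_def left_diff_distrib sum_subtractf)
    ultimately show ?thesis by simp
  qed
  then show ?thesis by (intro exI[of _ "\<lambda>i. W i j0"] exI[of _ "\<lambda>j. W i0 j - W i0 j0"]) blast
qed

lemma transport_entry_nonneg: "X \<in> transport_polytope \<mu> \<nu> \<Longrightarrow> 0 \<le> X$i$j"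
  unfolding transport_polytope_def by auto

lemma transport_entry_le_row:
  assumes "X \<in> transport_polytope \<mu> \<nu>" shows "X$i$j \<le> \<mu>$i"
proof -
  have "X$i$j \<le> (\<Sum>l\<in>UNIV. X$i$l)"
    using assms by (intro member_le_sum) (auto simp: transport_polytope_def)
  with assms show ?thesis by (simp add: transport_polytope_def)
qed

lemma convex_transport_polytope: "convex (transport_polytope \<mu> \<nu>)"
  unfolding convex_def transport_polytope_def
  by (auto simp: sum.distrib simp flip: sum_distrib_left distrib_right)

lemma closed_transport_polytope: "closed (transport_polytope (\<mu>::real^'n) \<nu>)"
proof -
  have "continuous_on UNIV (\<lambda>X::real^'n^'n. X$i$j)" for i j
    by (intro continuous_on_component continuous_on_id)
  then show ?thesis
    unfolding transport_polytope_def
    by (intro closed_Collect_conj closed_Collect_all closed_Collect_le closed_Collect_eq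
          continuous_on_sum continuous_on_const) auto
qed

lemma norm_le_sum_transport:
  assumes "X \<in> transport_polytope \<mu> \<nu>" shows "norm X \<le> (\<Sum>i\<in>UNIV. \<mu>$i)"
proof -
  have row: "norm (X$i) \<le> \<mu>$i" for i
  proof -
    have "norm (X$i) \<le> (\<Sum>j\<in>UNIV. \<bar>X$i$j\<bar>)" by (rule norm_le_l1_cart)
    also have "\<dots> = \<mu>$i" using assms by (simp add: transport_polytope_def)
    finally show ?thesis .
  qed
  have "norm X \<le> (\<Sum>i\<in>UNIV. norm (X$i))"
    unfolding norm_vec_def by (rule L2_set_le_sum) simp
  also have "\<dots> \<le> (\<Sum>i\<in>UNIV. \<mu>$i)" by (intro sum_mono row)
  finally show ?thesis .
qed

lemma compact_transport_polytope: "compact (transport_polytope \<mu> \<nu>)"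
  using closed_transport_polytope norm_le_sum_transport
  unfolding compact_eq_bounded_closed bounded_iff by blast

lemma transport_polytope_add_zero_margins:
  assumes "X \<in> transport_polytope \<mu> \<nu>" "\<forall>k. (\<Sum>l\<in>UNIV. D$k$l) = 0" "\<forall>l. (\<Sum>k\<in>UNIV. D$k$l) = 0"
    and "\<forall>k l. 0 \<le> X$k$l + D$k$l"
  shows "X + D \<in> transport_polytope \<mu> \<nu>"
  using assms unfolding transport_polytope_def by (simp add: sum.distrib)

lemma inner_oplus_diff_transport:
  assumes X: "X \<in> transport_polytope \<mu> \<nu>" and Y: "Y \<in> transport_polytope \<mu> \<nu>"
  shows "inner (oplus u v) (X - Y) = 0"
proof -
  have "(\<Sum>i\<in>UNIV. \<Sum>j\<in>UNIV. u$i * (X$i$j - Y$i$j))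
      = (\<Sum>i\<in>UNIV. u$i * ((\<Sum>j\<in>UNIV. X$i$j) - (\<Sum>j\<in>UNIV. Y$i$j)))"
    by (simp add: sum_subtractf sum_distrib_left right_diff_distrib)
  moreover have "(\<Sum>i\<in>UNIV. \<Sum>j\<in>UNIV. v$j * (X$i$j - Y$i$j))
      = (\<Sum>j\<in>UNIV. v$j * ((\<Sum>i\<in>UNIV. X$i$j) - (\<Sum>i\<in>UNIV. Y$i$j)))"
    by (subst sum.swap) (simp add: sum_subtractf sum_distrib_left right_diff_distrib)
  ultimately show ?thesis
    using X Y by (simp add: inner_matrix oplus_def transport_polytope_def distrib_right sum.distrib)
qed

locale legendre =
  fixes phi :: "real \<Rightarrow> ereal" and dphi :: "real \<Rightarrow> real"
  assumes bregman: "bregman_assumption phi dphi"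
begin

abbreviation int_dom :: "real set" where "int_dom \<equiv> interior (edom phi)"

definition phir :: "real \<Rightarrow> real" where "phir x = real_of_ereal (phi x)"

lemma phi_eq_phir: "x \<in> edom phi \<Longrightarrow> phi x = ereal (phir x)"
  using bregman unfolding bregman_assumption_def edom_def phir_def by (cases "phi x") auto

lemma phi_outside_edom: "x \<notin> edom phi \<Longrightarrow> phi x = \<infinity>"
  unfolding edom_def by simp

lemma convex_edom: "convex (edom phi)"
  using bregman is_interval_convex unfolding bregman_assumption_def by blast

lemma convex_on_phir: "convex_on (edom phi) phir"
  and strictly_convex_on_phir: "strictly_convex_on int_dom phir"
  and phir_has_derivative: "x \<in> int_dom \<Longrightarrow> (phir has_real_derivative dphi x) (at x)"
  and continuous_on_dphi: "continuous_on int_dom dphi"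
  and unit_interval_subset_int_dom: "{0<..<1} \<subseteq> int_dom"
  using bregman unfolding bregman_assumption_def phir_def by auto

lemma int_dom_subset_edom: "x \<in> int_dom \<Longrightarrow> x \<in> edom phi"
  using interior_subset by blast

lemma phir_above_tangent:
  assumes "x \<in> int_dom" "y \<in> edom phi"
  shows "phir x + dphi x * (y - x) \<le> phir y"
  using convex_on_imp_above_tangent[OF convex_on_phir convex_connected[OF convex_edom] assms
      has_field_derivative_at_within[OF phir_has_derivative[OF assms(1)]]] by simp

lemma dphi_monotone:
  assumes "x \<in> int_dom" "y \<in> int_dom"
  shows "0 \<le> (dphi y - dphi x) * (y - x)"
  using phir_above_tangent[OF assms(1) int_dom_subset_edom[OF assms(2)]]
    phir_above_tangent[OF assms(2) int_dom_subset_edom[OF assms(1)]]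
  by (simp add: algebra_simps)

lemma dphi_strict_mono:
  assumes x: "x \<in> int_dom" and y: "y \<in> int_dom" and "x < y"
  shows "dphi x < dphi y"
proof -
  define c where "c = (1 - 1/2) * x + (1/2) * y"
  have "(1 - 1/2) *\<^sub>R x + (1/2) *\<^sub>R y \<in> int_dom"
    using convex_interior[OF convex_edom] x y by (intro convexD_alt) auto
  then have c_dom: "c \<in> edom phi"
    unfolding c_def by (simp add: int_dom_subset_edom)
  have convex_gap: "phir c < (1 - 1/2) * phir x + (1/2) * phir y"
    unfolding c_def using \<open>x < y\<close> by (intro strictly_convex_onD[OF strictly_convex_on_phir x y]) auto
  define h where "h = (y - x) / 2"
  have "c - x = h" "c - y = - h"
    unfolding c_def h_def by (simp_all add: field_simps)
  then have "phir x + dphi x * h \<le> phir c" "phir y - dphi y * h \<le> phir c"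
    using phir_above_tangent[OF x c_dom] phir_above_tangent[OF y c_dom] by simp_all
  then have "0 < (dphi y - dphi x) * h"
    using convex_gap by (simp add: left_diff_distrib)
  then have "0 < (dphi y - dphi x) * ((y - x) / 2)"
    unfolding h_def .
  with \<open>x < y\<close> show ?thesis by (simp add: zero_less_mult_iff)
qed

lemma int_dom_if_finite_left_limit:
  assumes lim: "(dphi \<longlongrightarrow> L) (at_left b)" and "a < b" and sub: "{a<..<b} \<subseteq> int_dom"
  shows "b \<in> int_dom"
proof (rule ccontr)
  assume "b \<notin> int_dom"
  moreover have "b \<in> closure int_dom"
    using closure_mono[OF sub] \<open>a < b\<close> by auto
  ultimately have "b \<in> frontier int_dom" unfolding frontier_def by simp
  then have blowup: "filterlim (\<lambda>x. \<bar>dphi x\<bar>) at_top (at b within int_dom)"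
    using bregman unfolding bregman_assumption_def by blast
  define F where "F = at b within {a<..<b}"
  have "F \<noteq> bot" unfolding F_def using \<open>a < b\<close> by (subst at_within_eq_bot_iff) auto
  moreover have "filterlim (\<lambda>x. \<bar>dphi x\<bar>) at_top F"
    using filterlim_mono[OF blowup order_refl at_le[OF sub]] unfolding F_def .
  moreover have "F \<le> at_left b"
    unfolding F_def by (rule at_le) auto
  then have "((\<lambda>x. \<bar>dphi x\<bar>) \<longlongrightarrow> \<bar>L\<bar>) F"
    using tendsto_rabs[OF tendsto_mono[OF _ lim]] by blast
  ultimately show False
    using not_tendsto_and_filterlim_at_infinity filterlim_at_top_imp_at_infinity by blast
qed

abbreviation psi :: "real \<Rightarrow> ereal" where "psi \<equiv> fconj phi"

definition psir :: "real \<Rightarrow> real" where "psir y = real_of_ereal (psi y)"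

lemma psir_eq: "(\<lambda>y. real_of_ereal (psi y)) = psir"
  by (simp add: psir_def fun_eq_iff)

lemma fenchel_young: "x \<in> edom phi \<Longrightarrow> ereal (x * y - phir x) \<le> psi y"
  using SUP_upper[of x UNIV "\<lambda>x. ereal (x * y) - phi x"] by (simp add: fconj_def phi_eq_phir)

lemma psi_eq_psir:
  assumes "y \<in> edom psi" shows "psi y = ereal (psir y)"
proof -
  have "(1/2::real) \<in> edom phi"
    by (intro int_dom_subset_edom) (use unit_interval_subset_int_dom in auto)
  then have "psi y \<noteq> -\<infinity>" using fenchel_young[of "1/2" y] by auto
  with assms show ?thesis unfolding edom_def psir_def by (cases "psi y") auto
qed

lemma fconj_dphi:
  assumes x: "x \<in> int_dom" shows "psi (dphi x) = ereal (x * dphi x - phir x)"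
proof (rule antisym)
  show "psi (dphi x) \<le> ereal (x * dphi x - phir x)"
    unfolding fconj_def
  proof (rule SUP_least)
    fix w
    show "ereal (w * dphi x) - phi w \<le> ereal (x * dphi x - phir x)"
    proof (cases "w \<in> edom phi")
      case True
      then show ?thesis
        using phir_above_tangent[OF x True] by (simp add: phi_eq_phir algebra_simps)
    qed (simp add: phi_outside_edom)
  qed
qed (rule fenchel_young[OF int_dom_subset_edom[OF x]])

lemma dphi_in_edom_fconj: "x \<in> int_dom \<Longrightarrow> dphi x \<in> edom psi"
  using fconj_dphi unfolding edom_def by simp

lemma fconj_convex_combination:
  assumes "y1 \<in> edom psi" "y2 \<in> edom psi" "0 \<le> t" "t \<le> 1"
  shows "psi ((1 - t) * y1 + t * y2) \<le> ereal ((1 - t) * psir y1 + t * psir y2)"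
  unfolding fconj_def
proof (rule SUP_least)
  fix x
  show "ereal (x * ((1 - t) * y1 + t * y2)) - phi x \<le> ereal ((1 - t) * psir y1 + t * psir y2)"
  proof (cases "x \<in> edom phi")
    case True
    have "x * y1 - phir x \<le> psir y1" "x * y2 - phir x \<le> psir y2"
      using fenchel_young[OF True, of y1] fenchel_young[OF True, of y2]
        psi_eq_psir[OF assms(1)] psi_eq_psir[OF assms(2)] by simp_all
    then have "(1 - t) * (x * y1 - phir x) + t * (x * y2 - phir x) \<le> (1 - t) * psir y1 + t * psir y2"
      using assms(3,4) by (intro add_mono mult_left_mono) auto
    then show ?thesis using True by (simp add: phi_eq_phir algebra_simps)
  qed (simp add: phi_outside_edom)
qed

lemma convex_edom_fconj: "convex (edom psi)"
  unfolding convex_alt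
proof safe
  fix y1 y2 and t :: real
  assume "y1 \<in> edom psi" "y2 \<in> edom psi" "0 \<le> t" "t \<le> 1"
  from fconj_convex_combination[OF this] show "(1 - t) *\<^sub>R y1 + t *\<^sub>R y2 \<in> edom psi"
    unfolding edom_def by auto
qed

lemma convex_on_psir: "convex_on (edom psi) psir"
proof (rule convex_onI)
  fix t y1 y2 :: real
  assume "0 < t" "t < 1" "y1 \<in> edom psi" "y2 \<in> edom psi"
  moreover from this have "(1 - t) *\<^sub>R y1 + t *\<^sub>R y2 \<in> edom psi"
    using convex_edom_fconj by (intro convexD_alt) auto
  ultimately show "psir ((1 - t) *\<^sub>R y1 + t *\<^sub>R y2) \<le> (1 - t) * psir y1 + t * psir y2"
    using fconj_convex_combination[of y1 y2 t] by (simp add: psi_eq_psir)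
qed (rule convex_edom_fconj)

lemma fconj_eq_if_has_derivative:
  assumes z: "z \<in> interior (edom psi)" and deriv: "(psir has_real_derivative x) (at z)"
    and x: "x \<in> int_dom"
  shows "psi z = ereal (x * z - phir x)"
proof -
  have z_dom: "z \<in> edom psi" using z interior_subset by blast
  have "x * (dphi x - z) \<le> psir (dphi x) - psir z"
    using convex_on_imp_above_tangent[OF convex_on_psir convex_connected[OF convex_edom_fconj]
        z dphi_in_edom_fconj[OF x] has_field_derivative_at_within[OF deriv]] .
  moreover have "psir (dphi x) = x * dphi x - phir x"
    using fconj_dphi[OF x] by (simp add: psir_def)
  moreover have "x * z - phir x \<le> psir z"
    using fenchel_young[OF int_dom_subset_edom[OF x], of z] psi_eq_psir[OF z_dom] by simp
  ultimately show ?thesis using psi_eq_psir[OF z_dom] by (simp add: algebra_simps)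
qed

lemma dphi_local_inverse:
  assumes x: "x \<in> int_dom"
  obtains g z1 z2 where "z1 < dphi x" "dphi x < z2"
    and "\<And>y. y \<in> {z1<..<z2} \<Longrightarrow> g y \<in> int_dom \<and> dphi (g y) = y"
    and "g (dphi x) = x" and "isCont g (dphi x)"
proof -
  obtain d where "0 < d" and "cball x d \<subseteq> int_dom"
    using open_contains_cball x open_interior by blast
  then have ivl: "{x-d..x+d} \<subseteq> int_dom" by (simp add: cball_eq_atLeastAtMost)
  then have "strict_mono_on {x-d..x+d} dphi"
    by (intro strict_mono_onI dphi_strict_mono) auto
  then have inj: "inj_on dphi {x-d..x+d}" by (rule strict_mono_on_imp_inj_on)
  have cont: "continuous_on {x-d..x+d} dphi"
    using continuous_on_subset[OF continuous_on_dphi ivl] .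
  define g where "g = inv_into {x-d..x+d} dphi"
  have g_dphi: "g (dphi w) = w" if "\<bar>w - x\<bar> \<le> d" for w
    unfolding g_def using that by (intro inv_into_f_f[OF inj]) auto
  have "g y \<in> int_dom \<and> dphi (g y) = y" if "y \<in> {dphi (x-d)<..<dphi (x+d)}" for y
  proof -
    have "\<exists>w. x - d \<le> w \<and> w \<le> x + d \<and> dphi w = y"
      using that \<open>0 < d\<close> by (intro IVT'[OF _ _ _ cont]) auto
    then have y: "y \<in> dphi ` {x-d..x+d}" by auto
    have "g y \<in> {x-d..x+d}" unfolding g_def by (rule inv_into_into[OF y])
    moreover have "dphi (g y) = y" unfolding g_def by (rule f_inv_into_f[OF y])
    ultimately show ?thesis using ivl by auto
  qed
  moreover have "isCont g (dphi x)"
  proof (rule isCont_inverse_function[where f = dphi and x = x, OF \<open>0 < d\<close> g_dphi])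
    fix w assume "\<bar>w - x\<bar> \<le> d"
    then have "w \<in> {x-d..x+d}" by (simp add: abs_le_iff)
    then have "w \<in> int_dom" using ivl by blast
    then show "isCont dphi w"
      using continuous_on_dphi by (simp add: continuous_on_eq_continuous_at)
  qed
  moreover have "dphi (x-d) < dphi x" "dphi x < dphi (x+d)"
    using ivl \<open>0 < d\<close> x by (auto intro!: dphi_strict_mono)
  moreover have "g (dphi x) = x"
    using g_dphi[of x] \<open>0 < d\<close> by simp
  ultimately show thesis
    by (intro that[of "dphi (x-d)" "dphi (x+d)" g]) simp_all
qed

lemma fconj_dphi_secant_bounds:
  assumes "x \<in> int_dom" "w \<in> int_dom"
  shows "x * (dphi w - dphi x) \<le> psir (dphi w) - psir (dphi x)"
    and "psir (dphi w) - psir (dphi x) \<le> w * (dphi w - dphi x)"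
proof -
  have "psir (dphi x) = x * dphi x - phir x" "psir (dphi w) = w * dphi w - phir w"
    using fconj_dphi assms by (simp_all add: psir_def)
  moreover have "x * dphi w - phir x \<le> psir (dphi w)"
    using fenchel_young[OF int_dom_subset_edom[OF assms(1)], of "dphi w"]
      psi_eq_psir[OF dphi_in_edom_fconj[OF assms(2)]] by simp
  moreover have "w * dphi x - phir w \<le> psir (dphi x)"
    using fenchel_young[OF int_dom_subset_edom[OF assms(2)], of "dphi x"]
      psi_eq_psir[OF dphi_in_edom_fconj[OF assms(1)]] by simp
  ultimately show "x * (dphi w - dphi x) \<le> psir (dphi w) - psir (dphi x)"
    and "psir (dphi w) - psir (dphi x) \<le> w * (dphi w - dphi x)"
    by (simp_all add: algebra_simps)
qed

lemma fconj_has_derivative_dphi: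
  assumes x: "x \<in> int_dom"
  shows "dphi x \<in> interior (edom psi)" and "(psir has_real_derivative x) (at (dphi x))"
proof -
  obtain g z1 z2 where z12: "z1 < dphi x" "dphi x < z2"
    and g: "\<And>y. y \<in> {z1<..<z2} \<Longrightarrow> g y \<in> int_dom \<and> dphi (g y) = y"
    and gx: "g (dphi x) = x" and g_cont: "isCont g (dphi x)"
    using dphi_local_inverse[OF x] by blast
  have "{z1<..<z2} \<subseteq> edom psi"
  proof
    fix y assume "y \<in> {z1<..<z2}"
    with g have "g y \<in> int_dom" "dphi (g y) = y" by auto
    then show "y \<in> edom psi" using dphi_in_edom_fconj[of "g y"] by simp
  qed
  then show "dphi x \<in> interior (edom psi)"
    using z12 by (intro interiorI[of "{z1<..<z2}"]) auto
  let ?z = "dphi x"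
  \<comment> \<open>the secant slopes of psi at phi'(x) are squeezed between x and g y, and g y tends to x\<close>
  have secant: "\<bar>(psir y - psir ?z) / (y - ?z) - x\<bar> \<le> \<bar>g y - x\<bar>"
    if "y \<in> {z1<..<z2} - {?z}" for y
  proof -
    from that g have w: "g y \<in> int_dom" and y: "dphi (g y) = y" and "y \<noteq> ?z" by auto
    define r where "r = psir y - psir ?z - x * (y - ?z)"
    have "0 \<le> r" "r \<le> (g y - x) * (y - ?z)"
      using fconj_dphi_secant_bounds[OF x w] unfolding r_def y by (simp_all add: algebra_simps)
    then have "\<bar>r\<bar> \<le> \<bar>g y - x\<bar> * \<bar>y - ?z\<bar>"
      using abs_ge_self[of "(g y - x) * (y - ?z)"] by (simp add: abs_mult)
    moreover have "(psir y - psir ?z) / (y - ?z) - x = r / (y - ?z)"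
      unfolding r_def using \<open>y \<noteq> ?z\<close> by (simp add: field_simps)
    ultimately show ?thesis
      using \<open>y \<noteq> ?z\<close> by (simp add: divide_le_eq)
  qed
  have "eventually (\<lambda>y. y \<in> {z1<..<z2} - {?z}) (at ?z)"
    using z12 by (intro eventually_at_in_open) auto
  then have bound: "eventually (\<lambda>y. norm ((psir y - psir ?z) / (y - ?z) - x) \<le> \<bar>g y - x\<bar>) (at ?z)"
    by eventually_elim (simp add: secant)
  have "((\<lambda>y. \<bar>g y - x\<bar>) \<longlongrightarrow> 0) (at ?z)"
    using g_cont gx unfolding isCont_def by (simp add: tendsto_rabs_zero_iff LIM_zero_iff)
  with bound have "((\<lambda>y. (psir y - psir ?z) / (y - ?z) - x) \<longlongrightarrow> 0) (at ?z)"
    by (rule Lim_null_comparison)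
  then show "(psir has_real_derivative x) (at ?z)"
    by (simp add: has_field_derivative_iff LIM_zero_iff)
qed

definition phi_sum :: "real^'n^'m \<Rightarrow> real" where
  "phi_sum X = (\<Sum>i\<in>UNIV. \<Sum>j\<in>UNIV. phir (X$i$j))"

definition dphi_mat :: "real^'n^'m \<Rightarrow> real^'n^'m" where
  "dphi_mat X = (\<chi> i j. dphi (X$i$j))"

lemma mat_sum_phi_eq_phi_sum:
  assumes "\<forall>i j. X$i$j \<in> edom phi" shows "mat_sum phi X = ereal (phi_sum X)"
proof -
  have "phi (X$i$j) = ereal (phir (X$i$j))" for i j
    using assms phi_eq_phir by blast
  then show ?thesis unfolding mat_sum_def phi_sum_def by (simp only: sum_ereal)
qed

lemma mat_sum_phi_infinite:
  assumes "X$i$j \<notin> edom phi" shows "mat_sum phi X = \<infinity>"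
proof -
  have "(\<Sum>l\<in>UNIV. phi (X$i$l)) = \<infinity>"
    using phi_outside_edom[OF assms] by (subst sum_Pinfty) auto
  then show ?thesis unfolding mat_sum_def by (subst sum_Pinfty) auto
qed

lemma phi_sum_convex:
  assumes "\<forall>i j. X$i$j \<in> edom phi" "\<forall>i j. Y$i$j \<in> edom phi" "0 \<le> t" "t \<le> 1"
  shows "phi_sum ((1 - t) *\<^sub>R X + t *\<^sub>R Y) \<le> (1 - t) * phi_sum X + t * phi_sum Y"
proof -
  have "phi_sum ((1 - t) *\<^sub>R X + t *\<^sub>R Y)
      = (\<Sum>i\<in>UNIV. \<Sum>j\<in>UNIV. phir ((1 - t) *\<^sub>R X$i$j + t *\<^sub>R Y$i$j))"
    by (simp add: phi_sum_def)
  also have "\<dots> \<le> (\<Sum>i\<in>UNIV. \<Sum>j\<in>UNIV. (1 - t) * phir (X$i$j) + t * phir (Y$i$j))"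
    using assms by (intro sum_mono convex_onD[OF convex_on_phir]) auto
  also have "\<dots> = (1 - t) * phi_sum X + t * phi_sum Y"
    by (simp add: phi_sum_def sum.distrib sum_distrib_left)
  finally show ?thesis .
qed

lemma phi_sum_midpoint_strict:
  assumes "\<forall>i j. X$i$j \<in> int_dom" "\<forall>i j. Y$i$j \<in> int_dom" "X \<noteq> Y"
  shows "phi_sum ((1/2) *\<^sub>R X + (1/2) *\<^sub>R Y) < (1/2) * phi_sum X + (1/2) * phi_sum Y"
proof -
  obtain k l where "X$k$l \<noteq> Y$k$l" using assms(3) by (metis vec_eq_iff)
  define a where "a i j = phir ((1 - 1/2) * X$i$j + (1/2) * Y$i$j)" for i j
  define b where "b i j = (1 - 1/2) * phir (X$i$j) + (1/2) * phir (Y$i$j)" for i j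
  have le: "a i j \<le> b i j" for i j
    using assms(1,2) convex_onD[OF convex_on_phir, of "1/2" "X$i$j" "Y$i$j"]
    unfolding a_def b_def by (simp add: int_dom_subset_edom)
  have "a k l < b k l"
    unfolding a_def b_def using assms(1,2) \<open>X$k$l \<noteq> Y$k$l\<close>
    by (intro strictly_convex_onD[OF strictly_convex_on_phir]) auto
  then have "(\<Sum>j\<in>UNIV. a k j) < (\<Sum>j\<in>UNIV. b k j)"
    using le by (intro sum_strict_mono_ex1) auto
  then have "(\<Sum>i\<in>UNIV. \<Sum>j\<in>UNIV. a i j) < (\<Sum>i\<in>UNIV. \<Sum>j\<in>UNIV. b i j)"
    using le by (intro sum_strict_mono_ex1) (auto intro: sum_mono)
  then show ?thesis
    unfolding phi_sum_def a_def b_def by (simp add: sum.distrib sum_distrib_left)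
qed

lemma phi_sum_has_derivative:
  assumes "\<forall>i j. X$i$j \<in> int_dom"
  shows "((\<lambda>s. phi_sum (X + s *\<^sub>R D)) has_real_derivative inner (dphi_mat X) D) (at 0)"
proof -
  have "((\<lambda>s. phir (X$i$j + D$i$j * s)) has_real_derivative dphi (X$i$j) * D$i$j) (at 0)" for i j
  proof -
    have "(phir has_real_derivative dphi (X$i$j)) (at (X$i$j + D$i$j * 0))"
      using phir_has_derivative assms by simp
    moreover have "((\<lambda>s. X$i$j + D$i$j * s) has_real_derivative 0 + D$i$j) (at 0)"
      by (intro DERIV_add DERIV_const DERIV_cmult_Id)
    ultimately show ?thesis
      using DERIV_chain2 by fastforce
  qed
  then have "((\<lambda>s. \<Sum>i\<in>UNIV. \<Sum>j\<in>UNIV. phir (X$i$j + D$i$j * s)) has_real_derivative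
      (\<Sum>i\<in>UNIV. \<Sum>j\<in>UNIV. dphi (X$i$j) * D$i$j)) (at 0)"
    by (intro DERIV_sum)
  then show ?thesis
    unfolding phi_sum_def inner_matrix dphi_mat_def by (simp add: mult.commute)
qed

lemma fenchel_young_mat:
  assumes "\<forall>i j. X$i$j \<in> edom phi"
  shows "ereal (inner Z X - phi_sum X) \<le> mat_sum psi Z"
proof -
  have "ereal (inner Z X - phi_sum X) = (\<Sum>i\<in>UNIV. \<Sum>j\<in>UNIV. ereal (X$i$j * Z$i$j - phir (X$i$j)))"
    by (simp add: inner_matrix phi_sum_def sum_subtractf mult.commute)
  also have "\<dots> \<le> mat_sum psi Z"
    unfolding mat_sum_def using assms by (intro sum_mono fenchel_young) auto
  finally show ?thesis .
qed

lemma fenchel_young_mat_eq: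
  assumes "\<forall>i j. X$i$j \<in> int_dom"
    and "\<forall>i j. Z$i$j \<in> interior (edom psi) \<and> (psir has_real_derivative X$i$j) (at (Z$i$j))"
  shows "mat_sum psi Z = ereal (inner Z X - phi_sum X)"
proof -
  have "psi (Z$i$j) = ereal (X$i$j * Z$i$j - phir (X$i$j))" for i j
    using assms by (intro fconj_eq_if_has_derivative) auto
  then show ?thesis
    by (simp add: mat_sum_def inner_matrix phi_sum_def sum_subtractf mult.commute)
qed

end

locale forward_problem = legendre +
  fixes \<mu> \<nu> :: "real^'n" and \<gamma> :: real and Xh :: "real^'n^'n"
  assumes prob_vec_mu: "prob_vec \<mu>" and gamma_pos: "0 < \<gamma>"
    and dphi0: "dphi0_neg_inf dphi" and Xh: "Xh \<in> T_phi dphi \<mu> \<nu>"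
begin

abbreviation U :: "(real^'n^'n) set" where "U \<equiv> transport_polytope \<mu> \<nu>"

lemma Xh_in_U: "Xh \<in> U" and Xh_pos: "0 < Xh$i$j"
  using Xh unfolding T_phi_def by auto

lemma mu_pos: "0 < \<mu>$i"
  using Xh_pos[of i i] transport_entry_le_row[OF Xh_in_U] by (rule order_less_le_trans)

lemma mu_le_1: "\<mu>$i \<le> 1"
proof -
  have "\<mu>$i \<le> (\<Sum>k\<in>UNIV. \<mu>$k)"
    using prob_vec_mu unfolding prob_vec_def by (intro member_le_sum) auto
  then show ?thesis using prob_vec_mu unfolding prob_vec_def by simp
qed

lemma transport_entry_le_1: "X \<in> U \<Longrightarrow> X$i$j \<le> 1"
  using transport_entry_le_row mu_le_1 order_trans by blast

(* mu_i = 1 forces n = 1 and then X-hat = 1, which T_phi only admits when phi'(1-) is finite;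
   essential smoothness then rules out 1 being a boundary point of the domain. *)
lemma one_in_int_dom_if_mu_eq_1:
  assumes "\<mu>$i = 1" shows "1 \<in> int_dom"
proof -
  have "k = i" for k
  proof (rule ccontr)
    assume "k \<noteq> i"
    then have "\<mu>$i + \<mu>$k \<le> (\<Sum>l\<in>UNIV. \<mu>$l)"
      using prob_vec_mu sum_mono2[of UNIV "{i, k}" "\<lambda>l. \<mu>$l"]
      unfolding prob_vec_def by simp
    then show False using assms mu_pos[of k] prob_vec_mu unfolding prob_vec_def by simp
  qed
  then have univ: "UNIV = {i}" by auto
  have "(\<Sum>j\<in>UNIV. Xh$i$j) = Xh$i$i" unfolding univ by simp
  then have "Xh$i$i = 1"
    using Xh_in_U assms unfolding transport_polytope_def by simp
  moreover have "if dphi1_finite dphi then Xh$i$i \<le> 1 else Xh$i$i < 1"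
    using Xh unfolding T_phi_def by blast
  ultimately have "dphi1_finite dphi"
    by (simp split: if_splits)
  then obtain L where "(dphi \<longlongrightarrow> L) (at_left 1)"
    unfolding dphi1_finite_def by blast
  then show ?thesis
    by (rule int_dom_if_finite_left_limit[where a = 0]) (simp_all add: unit_interval_subset_int_dom)
qed

lemma positive_entry_in_int_dom:
  assumes X: "X \<in> U" and pos: "0 < X$i$j"
  shows "X$i$j \<in> int_dom"
proof (cases "X$i$j < 1")
  case True
  then show ?thesis using pos unit_interval_subset_int_dom by auto
next
  case False
  then have "X$i$j = 1"
    using transport_entry_le_1[OF X, of i j] by simp
  moreover from this have "\<mu>$i = 1"
    using transport_entry_le_row[OF X, of i j] mu_le_1[of i] by simp
  ultimately show ?thesis using one_in_int_dom_if_mu_eq_1 by simp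
qed

definition cost :: "real^'n^'n \<Rightarrow> real^'n^'n \<Rightarrow> real" where
  "cost C X = inner C X + \<gamma> * phi_sum X"

lemma forward_objective_eq_cost:
  assumes "\<forall>i j. X$i$j \<in> edom phi"
  shows "ereal (inner C X) + ereal \<gamma> * mat_sum phi X = ereal (cost C X)"
  by (simp add: mat_sum_phi_eq_phi_sum[OF assms] cost_def)

lemma forward_objective_infinite:
  assumes "X$i$j \<notin> edom phi"
  shows "ereal (inner C X) + ereal \<gamma> * mat_sum phi X = \<infinity>"
  using gamma_pos by (simp add: mat_sum_phi_infinite[OF assms])

lemma cost_convex:
  assumes "\<forall>i j. X$i$j \<in> edom phi" "\<forall>i j. Y$i$j \<in> edom phi" "0 \<le> t" "t \<le> 1"
  shows "cost C ((1 - t) *\<^sub>R X + t *\<^sub>R Y) \<le> (1 - t) * cost C X + t * cost C Y"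
  using mult_left_mono[OF phi_sum_convex[OF assms] less_imp_le[OF gamma_pos]]
  by (simp add: cost_def algebra_simps)

lemma cost_midpoint_strict:
  assumes "\<forall>i j. X$i$j \<in> int_dom" "\<forall>i j. Y$i$j \<in> int_dom" "X \<noteq> Y"
  shows "cost C ((1/2) *\<^sub>R X + (1/2) *\<^sub>R Y) < (1/2) * cost C X + (1/2) * cost C Y"
  using mult_strict_left_mono[OF phi_sum_midpoint_strict[OF assms] gamma_pos]
  by (simp add: cost_def algebra_simps)

lemma cost_has_derivative:
  assumes "\<forall>i j. X$i$j \<in> int_dom"
  shows "((\<lambda>s. cost C (X + s *\<^sub>R D)) has_real_derivative inner (C + \<gamma> *\<^sub>R dphi_mat X) D) (at 0)"
proof -
  have "(\<lambda>s. cost C (X + s *\<^sub>R D)) = (\<lambda>s. (inner C X + inner C D * s) + \<gamma> * phi_sum (X + s *\<^sub>R D))"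
    by (simp add: cost_def inner_add_right fun_eq_iff mult.commute)
  moreover have "inner (C + \<gamma> *\<^sub>R dphi_mat X) D = (0 + inner C D) + \<gamma> * inner (dphi_mat X) D"
    by (simp add: inner_add_left)
  ultimately show ?thesis
    using DERIV_add[OF DERIV_add[OF DERIV_const DERIV_cmult_Id] DERIV_cmult[OF phi_sum_has_derivative[OF assms]]]
    by simp
qed

definition U_above :: "real \<Rightarrow> (real^'n^'n) set" where
  "U_above \<delta> = {X \<in> U. \<forall>i j. \<delta> \<le> X$i$j}"

lemma convex_U_above: "convex (U_above \<delta>)"
proof (rule convexI)
  fix X Y and u v :: real
  assume X: "X \<in> U_above \<delta>" and Y: "Y \<in> U_above \<delta>" and uv: "0 \<le> u" "0 \<le> v" "u + v = 1"
  have "u *\<^sub>R X + v *\<^sub>R Y \<in> U"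
    using X Y uv convexD[OF convex_transport_polytope] unfolding U_above_def by blast
  moreover have "\<delta> \<le> (u *\<^sub>R X + v *\<^sub>R Y)$i$j" for i j
  proof -
    have "u * \<delta> + v * \<delta> \<le> u * X$i$j + v * Y$i$j"
      using X Y uv unfolding U_above_def by (intro add_mono mult_left_mono) auto
    then show ?thesis using uv by (simp flip: distrib_right)
  qed
  ultimately show "u *\<^sub>R X + v *\<^sub>R Y \<in> U_above \<delta>"
    unfolding U_above_def by blast
qed

lemma compact_U_above: "compact (U_above \<delta>)"
proof -
  have "continuous_on UNIV (\<lambda>X::real^'n^'n. X$i$j)" for i j
    by (intro continuous_on_component continuous_on_id)
  then have "closed {X::real^'n^'n. \<forall>i j. \<delta> \<le> X$i$j}"
    by (intro closed_Collect_all closed_Collect_le continuous_on_const) auto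
  then have "compact (U \<inter> {X. \<forall>i j. \<delta> \<le> X$i$j})"
    using compact_transport_polytope by (rule compact_Int_closed[rotated])
  moreover have "U_above \<delta> = U \<inter> {X. \<forall>i j. \<delta> \<le> X$i$j}"
    unfolding U_above_def by blast
  ultimately show ?thesis by simp
qed

lemma U_above_in_int_dom:
  assumes "0 < \<delta>" "X \<in> U_above \<delta>" shows "X$i$j \<in> int_dom"
proof -
  have "X \<in> U" "\<delta> \<le> X$i$j" using assms(2) unfolding U_above_def by auto
  with assms(1) show ?thesis by (intro positive_entry_in_int_dom) auto
qed

lemma continuous_on_cost_U_above:
  assumes "0 < \<delta>" shows "continuous_on (U_above \<delta>) (cost C)"
proof -
  have phir_cont: "continuous_on int_dom phir"
    using phir_has_derivative DERIV_isCont by (blast intro: continuous_at_imp_continuous_on)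
  have entry_cont: "continuous_on (U_above \<delta>) (\<lambda>X::real^'n^'n. X$i$j)" for i j
    by (intro continuous_on_component continuous_on_id)
  have "(\<lambda>X. X$i$j) ` U_above \<delta> \<subseteq> int_dom" for i j
    using U_above_in_int_dom[OF assms] by blast
  then have "continuous_on (U_above \<delta>) (\<lambda>X. phir (X$i$j))" for i j
    by (rule continuous_on_compose2[OF phir_cont entry_cont])
  then have "continuous_on (U_above \<delta>) phi_sum"
    unfolding phi_sum_def by (intro continuous_on_sum)
  then show ?thesis
    unfolding cost_def by (intro continuous_on_add continuous_on_mult continuous_on_inner
        continuous_on_const continuous_on_id)
qed

lemma cost_attains_min_on_U_above:
  assumes "0 < \<delta>" "Xh \<in> U_above \<delta>"
  obtains M where "M \<in> U_above \<delta>" "\<And>Y. Y \<in> U_above \<delta> \<Longrightarrow> cost C M \<le> cost C Y"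
  using continuous_attains_inf[OF compact_U_above _ continuous_on_cost_U_above[OF assms(1)]] assms(2)
  by blast

definition gradient_bound :: "real^'n^'n \<Rightarrow> real" where
  "gradient_bound C = (\<Sum>k\<in>UNIV. \<Sum>l\<in>UNIV. \<bar>C$k$l\<bar> + \<gamma> * \<bar>dphi (Xh$k$l)\<bar>)"

lemma transport_diff_abs_le_1:
  assumes "X \<in> U" "Y \<in> U" shows "\<bar>X$k$l - Y$k$l\<bar> \<le> 1"
  using transport_entry_nonneg[OF assms(1), of k l] transport_entry_nonneg[OF assms(2), of k l]
    transport_entry_le_1[OF assms(1), of k l] transport_entry_le_1[OF assms(2), of k l] by simp

lemma cost_slope_entry_le:
  assumes M: "M \<in> U" "M$k$l \<in> int_dom"
  shows "(C$k$l + \<gamma> * dphi (M$k$l)) * (Xh$k$l - M$k$l) \<le> \<bar>C$k$l\<bar> + \<gamma> * \<bar>dphi (Xh$k$l)\<bar>"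
proof -
  note le_abs = mult_le_abs_if_abs_le_1[OF transport_diff_abs_le_1[OF Xh_in_U M(1), of k l]]
  have "dphi (M$k$l) * (Xh$k$l - M$k$l) \<le> dphi (Xh$k$l) * (Xh$k$l - M$k$l)"
    using dphi_monotone[OF M(2) positive_entry_in_int_dom[OF Xh_in_U Xh_pos]]
    by (simp add: algebra_simps)
  also have "\<dots> \<le> \<bar>dphi (Xh$k$l)\<bar>" by (rule le_abs)
  finally have "\<gamma> * (dphi (M$k$l) * (Xh$k$l - M$k$l)) \<le> \<gamma> * \<bar>dphi (Xh$k$l)\<bar>"
    using gamma_pos by simp
  then show ?thesis
    using le_abs[of "C$k$l"] by (simp add: algebra_simps)
qed

lemma cost_slope_towards_Xh_le:
  assumes \<delta>: "0 < \<delta>" and p: "\<And>k l. p \<le> Xh$k$l" "2 * \<delta> \<le> p" and "dphi \<delta> \<le> 0"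
    and M: "M \<in> U_above \<delta>" and Mij: "M$i$j = \<delta>"
  shows "inner (C + \<gamma> *\<^sub>R dphi_mat M) (Xh - M) \<le> gradient_bound C + \<gamma> * p * dphi \<delta> / 2"
proof -
  have M_U: "M \<in> U" using M unfolding U_above_def by blast
  have M_int: "M$k$l \<in> int_dom" for k l using U_above_in_int_dom[OF \<delta> M] .
  define t where "t k l = (C$k$l + \<gamma> * dphi (M$k$l)) * (Xh$k$l - M$k$l)" for k l
  define b where "b k l = \<bar>C$k$l\<bar> + \<gamma> * \<bar>dphi (Xh$k$l)\<bar>" for k l
  have t_le_b: "t k l \<le> b k l" for k l
    unfolding t_def b_def using cost_slope_entry_le[OF M_U M_int] .
  have t_ij: "t i j \<le> b i j + \<gamma> * p * dphi \<delta> / 2"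
  proof -
    have "p / 2 \<le> Xh$i$j - \<delta>" using p(1)[of i j] p(2) by simp
    then have "\<gamma> * (dphi \<delta> * (Xh$i$j - \<delta>)) \<le> \<gamma> * (dphi \<delta> * (p / 2))"
      using \<open>dphi \<delta> \<le> 0\<close> gamma_pos by (intro mult_left_mono mult_left_mono_neg) auto
    moreover have "\<gamma> * (dphi \<delta> * (p / 2)) = \<gamma> * p * dphi \<delta> / 2" by simp
    moreover have "C$i$j * (Xh$i$j - \<delta>) \<le> \<bar>C$i$j\<bar>"
      using mult_le_abs_if_abs_le_1[OF transport_diff_abs_le_1[OF Xh_in_U M_U, of i j]] Mij by simp
    moreover have "t i j = C$i$j * (Xh$i$j - \<delta>) + \<gamma> * (dphi \<delta> * (Xh$i$j - \<delta>))"
      unfolding t_def Mij by (simp add: distrib_right)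
    moreover have "0 \<le> \<gamma> * \<bar>dphi (Xh$i$j)\<bar>" using gamma_pos by simp
    ultimately show ?thesis unfolding b_def by linarith
  qed
  have "inner (C + \<gamma> *\<^sub>R dphi_mat M) (Xh - M) = (\<Sum>k\<in>UNIV. \<Sum>l\<in>UNIV. t k l)"
    unfolding t_def inner_matrix dphi_mat_def by simp
  also have "\<dots> \<le> (\<Sum>k\<in>UNIV. \<Sum>l\<in>UNIV. b k l) + \<gamma> * p * dphi \<delta> / 2"
  proof (rule sum_le_sum_plus_one_excess[where i = i])
    show "(\<Sum>l\<in>UNIV. t k l) \<le> (\<Sum>l\<in>UNIV. b k l)" for k
      using t_le_b by (intro sum_mono)
    show "(\<Sum>l\<in>UNIV. t i l) \<le> (\<Sum>l\<in>UNIV. b i l) + \<gamma> * p * dphi \<delta> / 2"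
      using t_le_b t_ij by (rule sum_le_sum_plus_one_excess)
  qed
  finally show ?thesis unfolding b_def gradient_bound_def .
qed

lemma Xh_in_U_above:
  assumes "\<And>k l. p \<le> Xh$k$l" "\<delta> \<le> p" shows "Xh \<in> U_above \<delta>"
  using assms Xh_in_U order_trans unfolding U_above_def by blast

lemma U_above_minimizer_off_floor:
  assumes \<delta>: "0 < \<delta>" and p: "\<And>k l. p \<le> Xh$k$l" "2 * \<delta> \<le> p"
    and barrier: "\<gamma> * p * dphi \<delta> + 2 * gradient_bound C < 0"
    and M: "M \<in> U_above \<delta>" and M_min: "\<And>Y. Y \<in> U_above \<delta> \<Longrightarrow> cost C M \<le> cost C Y"
  shows "\<delta> < M$i$j"
proof (rule ccontr)
  assume "\<not> \<delta> < M$i$j"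
  moreover have "\<delta> \<le> M$i$j" using M unfolding U_above_def by auto
  ultimately have Mij: "M$i$j = \<delta>" by simp
  have "0 \<le> gradient_bound C"
    using gamma_pos unfolding gradient_bound_def by (intro sum_nonneg) simp
  then have "\<gamma> * p * dphi \<delta> < 0" using barrier by linarith
  moreover have "0 < p" using p(2) \<delta> by simp
  ultimately have "dphi \<delta> \<le> 0" using gamma_pos by (auto simp: mult_less_0_iff)
  have "inner (C + \<gamma> *\<^sub>R dphi_mat M) (Xh - M) < 0"
    using cost_slope_towards_Xh_le[OF \<delta> p \<open>dphi \<delta> \<le> 0\<close> M Mij, of C] barrier by linarith
  moreover have "\<forall>k l. M$k$l \<in> int_dom" using U_above_in_int_dom[OF \<delta> M] by blast
  note DERIV_neg_dec_right[OF cost_has_derivative[OF this] calculation]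
  then obtain d where "0 < d" and dec: "\<And>h. 0 < h \<Longrightarrow> h < d \<Longrightarrow> cost C (M + h *\<^sub>R (Xh - M)) < cost C M"
    by auto
  define h where "h = min (d / 2) 1"
  have h: "0 < h" "h < d" "h \<le> 1" unfolding h_def using \<open>0 < d\<close> by auto
  have "Xh \<in> U_above \<delta>" using \<delta> p(2) by (intro Xh_in_U_above[OF p(1)]) linarith
  then have "(1 - h) *\<^sub>R M + h *\<^sub>R Xh \<in> U_above \<delta>"
    using h by (intro convexD_alt[OF convex_U_above M]) auto
  moreover have "(1 - h) *\<^sub>R M + h *\<^sub>R Xh = M + h *\<^sub>R (Xh - M)"
    by (simp add: algebra_simps)
  ultimately show False
    using M_min dec[OF h(1,2)] by fastforce
qed

lemma U_above_minimizer_global: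
  assumes \<delta>: "0 < \<delta>" and M: "M \<in> U_above \<delta>" and above: "\<And>k l. \<delta> < M$k$l"
    and M_min: "\<And>Z. Z \<in> U_above \<delta> \<Longrightarrow> cost C M \<le> cost C Z"
    and Y: "Y \<in> U" and Y_dom: "\<forall>k l. Y$k$l \<in> edom phi"
  shows "cost C M \<le> cost C Y"
proof (rule ccontr)
  assume "\<not> ?thesis"
  then have less: "cost C Y < cost C M" by simp
  have M_U: "M \<in> U" using M unfolding U_above_def by blast
  obtain \<eta> where "0 < \<eta>" and \<eta>: "\<And>k l. \<eta> \<le> M$k$l - \<delta>"
    using positive_lower_bound[of "\<lambda>k l. M$k$l - \<delta>"] above by auto
  define h where "h = min \<eta> 1"
  have h: "0 < h" "h \<le> 1" "h \<le> \<eta>" unfolding h_def using \<open>0 < \<eta>\<close> by auto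
  define Z where "Z = (1 - h) *\<^sub>R M + h *\<^sub>R Y"
  have "\<delta> \<le> Z$k$l" for k l
  proof -
    have "h * M$k$l \<le> h" using h transport_entry_le_1[OF M_U, of k l] by (simp add: mult_left_le)
    moreover have "0 \<le> h * Y$k$l" using h transport_entry_nonneg[OF Y, of k l] by simp
    moreover have "Z$k$l = M$k$l - h * M$k$l + h * Y$k$l"
      unfolding Z_def by (simp add: algebra_simps)
    ultimately show ?thesis using \<eta>[of k l] h by linarith
  qed
  moreover have "Z \<in> U"
    unfolding Z_def using h by (intro convexD_alt[OF convex_transport_polytope M_U Y]) auto
  ultimately have "Z \<in> U_above \<delta>" unfolding U_above_def by blast
  then have "cost C M \<le> cost C Z" by (rule M_min)
  also have "\<dots> \<le> (1 - h) * cost C M + h * cost C Y"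
    unfolding Z_def using U_above_in_int_dom[OF \<delta> M] int_dom_subset_edom Y_dom h
    by (intro cost_convex) auto
  also have "\<dots> < cost C M"
    using less h by (simp add: algebra_simps)
  finally show False by simp
qed

lemma cost_minimizer_exists:
  obtains M where "M \<in> U" "\<And>i j. 0 < M$i$j"
    and "\<And>Y. Y \<in> U \<Longrightarrow> \<forall>i j. Y$i$j \<in> edom phi \<Longrightarrow> cost C M \<le> cost C Y"
proof -
  obtain p where "0 < p" and p: "\<And>k l. p \<le> Xh$k$l"
    using positive_lower_bound[of "\<lambda>k l. Xh$k$l"] Xh_pos by blast
  have "eventually (\<lambda>x. dphi x < - 2 * gradient_bound C / (\<gamma> * p)) (at_right 0)"
    using dphi0 unfolding dphi0_neg_inf_def filterlim_at_bot_dense by blast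
  then obtain b where "0 < b" and b: "\<And>x. 0 < x \<Longrightarrow> x < b \<Longrightarrow> dphi x < - 2 * gradient_bound C / (\<gamma> * p)"
    unfolding eventually_at_right_field by blast
  define \<delta> where "\<delta> = min (b / 2) (p / 2)"
  have \<delta>: "0 < \<delta>" "2 * \<delta> \<le> p" "\<delta> < b"
    unfolding \<delta>_def using \<open>0 < b\<close> \<open>0 < p\<close> by auto
  have "\<gamma> * p * dphi \<delta> < \<gamma> * p * (- 2 * gradient_bound C / (\<gamma> * p))"
    using b[OF \<delta>(1,3)] gamma_pos \<open>0 < p\<close> by (intro mult_strict_left_mono) auto
  then have barrier: "\<gamma> * p * dphi \<delta> + 2 * gradient_bound C < 0"
    using gamma_pos \<open>0 < p\<close> by simp
  have "Xh \<in> U_above \<delta>" using \<delta>(1,2) by (intro Xh_in_U_above[OF p]) linarith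
  then obtain M where M: "M \<in> U_above \<delta>" and M_min: "\<And>Y. Y \<in> U_above \<delta> \<Longrightarrow> cost C M \<le> cost C Y"
    using cost_attains_min_on_U_above[OF \<delta>(1)] by blast
  have above: "\<delta> < M$k$l" for k l
    using U_above_minimizer_off_floor[OF \<delta>(1) p \<delta>(2) barrier M M_min] .
  show thesis
  proof
    show "M \<in> U" using M unfolding U_above_def by blast
    show "0 < M$i$j" for i j using above[of i j] \<delta>(1) by simp
    show "cost C M \<le> cost C Y" if "Y \<in> U" "\<forall>i j. Y$i$j \<in> edom phi" for Y
      using U_above_minimizer_global[OF \<delta>(1) M above M_min that] .
  qed
qed

lemma cost_minimizer_unique:
  assumes M: "M \<in> U" "\<And>i j. 0 < M$i$j"
    and M_min: "\<And>Y. Y \<in> U \<Longrightarrow> \<forall>i j. Y$i$j \<in> edom phi \<Longrightarrow> cost C M \<le> cost C Y"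
    and X: "X \<in> U" "\<forall>i j. X$i$j \<in> edom phi" "cost C X \<le> cost C M"
  shows "X = M"
proof (rule ccontr)
  assume "X \<noteq> M"
  have M_dom: "\<forall>i j. M$i$j \<in> edom phi"
    using positive_entry_in_int_dom[OF M] int_dom_subset_edom by blast
  \<comment> \<open>X may vanish somewhere, so strict convexity is applied to M and the positive midpoint Y\<close>
  define Y where "Y = (1/2) *\<^sub>R M + (1/2) *\<^sub>R X"
  have Y_U: "Y \<in> U"
    unfolding Y_def using convexD[OF convex_transport_polytope M(1) X(1)] by simp
  have Y_pos: "0 < Y$i$j" for i j
    unfolding Y_def using M(2)[of i j] transport_entry_nonneg[OF X(1), of i j] by simp
  have "cost C Y \<le> (1/2) * cost C M + (1/2) * cost C X"
    using cost_convex[OF M_dom X(2), of "1/2" C] unfolding Y_def by simp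
  with X(3) have "cost C Y \<le> cost C M" by simp
  have "X = 2 *\<^sub>R Y - M" unfolding Y_def by (simp add: scaleR_add_right)
  have "Y \<noteq> M"
  proof
    assume "Y = M"
    with \<open>X = 2 *\<^sub>R Y - M\<close> have "X = 2 *\<^sub>R M - M" by simp
    also have "\<dots> = M" by (simp add: scaleR_2)
    finally show False using \<open>X \<noteq> M\<close> by simp
  qed
  let ?Z = "(1/2) *\<^sub>R Y + (1/2) *\<^sub>R M"
  have Z_U: "?Z \<in> U" using convexD[OF convex_transport_polytope Y_U M(1)] by simp
  moreover have "\<forall>i j. ?Z$i$j \<in> edom phi"
  proof (intro allI)
    fix i j
    have "0 < ?Z$i$j" using Y_pos[of i j] M(2)[of i j] by simp
    then show "?Z$i$j \<in> edom phi"
      by (intro int_dom_subset_edom positive_entry_in_int_dom[OF Z_U])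
  qed
  ultimately have "cost C M \<le> cost C ?Z" by (rule M_min)
  also have "\<dots> < (1/2) * cost C Y + (1/2) * cost C M"
    using positive_entry_in_int_dom[OF Y_U Y_pos] positive_entry_in_int_dom[OF M] \<open>Y \<noteq> M\<close>
    by (intro cost_midpoint_strict) auto
  also have "\<dots> \<le> cost C M" using \<open>cost C Y \<le> cost C M\<close> by simp
  finally show False by simp
qed

lemma forward_eq_minimizer:
  assumes M: "M \<in> U" "\<And>i j. 0 < M$i$j"
    and M_min: "\<And>Y. Y \<in> U \<Longrightarrow> \<forall>i j. Y$i$j \<in> edom phi \<Longrightarrow> cost C M \<le> cost C Y"
  shows "forward phi \<gamma> \<mu> \<nu> C = M"
proof -
  let ?obj = "\<lambda>X. ereal (inner C X) + ereal \<gamma> * mat_sum phi X"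
  have M_dom: "\<forall>i j. M$i$j \<in> edom phi"
    using positive_entry_in_int_dom[OF M] int_dom_subset_edom by blast
  have M_opt: "?obj M \<le> ?obj Y" if "Y \<in> U" for Y
  proof (cases "\<forall>i j. Y$i$j \<in> edom phi")
    case True
    then show ?thesis
      using M_min[OF that True]
      by (simp add: forward_objective_eq_cost[OF M_dom] forward_objective_eq_cost[OF True])
  next
    case False
    then obtain i j where "Y$i$j \<notin> edom phi" by blast
    then have Y_inf: "?obj Y = \<infinity>" by (rule forward_objective_infinite)
    show ?thesis by (subst Y_inf) simp
  qed
  have unique: "X = M" if X: "X \<in> U" and X_opt: "?obj X \<le> ?obj M" for X
  proof (rule cost_minimizer_unique[OF M M_min X])
    show X_dom: "\<forall>i j. X$i$j \<in> edom phi"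
    proof (rule ccontr)
      assume "\<not> ?thesis"
      then obtain i j where "X$i$j \<notin> edom phi" by blast
      then have "?obj X = \<infinity>" by (rule forward_objective_infinite)
      with X_opt show False by (simp only: forward_objective_eq_cost[OF M_dom]) simp
    qed
    show "cost C X \<le> cost C M"
      using X_opt by (simp add: forward_objective_eq_cost[OF M_dom] forward_objective_eq_cost[OF X_dom])
  qed
  show ?thesis
    unfolding forward_def
  proof (rule the_equality)
    show "M \<in> U \<and> (\<forall>Y\<in>U. ?obj M \<le> ?obj Y)" using M(1) M_opt by blast
  qed (use unique M(1) in blast)
qed

abbreviation forward_plan :: "real^'n^'n \<Rightarrow> real^'n^'n" ("\<F>") where
  "\<F> C \<equiv> forward phi \<gamma> \<mu> \<nu> C"

lemma forward_in_U: "\<F> C \<in> U"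
  and forward_pos: "0 < \<F> C $i$j"
  and forward_min: "Y \<in> U \<Longrightarrow> \<forall>i j. Y$i$j \<in> edom phi \<Longrightarrow> cost C (\<F> C) \<le> cost C Y"
proof -
  obtain M where "M \<in> U" "\<And>i j. 0 < M$i$j"
    and "\<And>Y. Y \<in> U \<Longrightarrow> \<forall>i j. Y$i$j \<in> edom phi \<Longrightarrow> cost C M \<le> cost C Y"
    using cost_minimizer_exists[of C] by blast
  moreover from this have "\<F> C = M" by (rule forward_eq_minimizer)
  ultimately show "\<F> C \<in> U" "0 < \<F> C $i$j"
    and "Y \<in> U \<Longrightarrow> \<forall>i j. Y$i$j \<in> edom phi \<Longrightarrow> cost C (\<F> C) \<le> cost C Y"
    by simp_all
qed

lemma forward_in_int_dom: "\<F> C $i$j \<in> int_dom"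
  using positive_entry_in_int_dom[OF forward_in_U forward_pos] .

lemma forward_stationary:
  assumes "\<forall>k. (\<Sum>l\<in>UNIV. D$k$l) = 0" "\<forall>l. (\<Sum>k\<in>UNIV. D$k$l) = 0"
  shows "inner (C + \<gamma> *\<^sub>R dphi_mat (\<F> C)) D = 0"
proof -
  let ?F = "\<F> C"
  have "eventually (\<lambda>s. 0 < ?F$k$l + s * D$k$l) (at 0)" for k l
  proof -
    have "((\<lambda>s. ?F$k$l + s * D$k$l) \<longlongrightarrow> ?F$k$l + 0 * D$k$l) (at 0)"
      by (intro tendsto_add tendsto_mult tendsto_const tendsto_ident_at)
    then show ?thesis using forward_pos[of C k l] by (simp add: order_tendstoD(1))
  qed
  then have "eventually (\<lambda>s. \<forall>k l. 0 < ?F$k$l + s * D$k$l) (at 0)"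
    by (intro eventually_all_finite)
  then have local_min: "eventually (\<lambda>s. cost C (?F + 0 *\<^sub>R D) \<le> cost C (?F + s *\<^sub>R D)) (at 0)"
  proof eventually_elim
    case (elim s)
    have in_U: "?F + s *\<^sub>R D \<in> U"
      using elim assms by (intro transport_polytope_add_zero_margins[OF forward_in_U])
        (auto simp: less_imp_le simp flip: sum_distrib_left)
    moreover have "\<forall>k l. (?F + s *\<^sub>R D)$k$l \<in> edom phi"
    proof (intro allI)
      fix k l
      have "0 < (?F + s *\<^sub>R D)$k$l" using elim by simp
      then show "(?F + s *\<^sub>R D)$k$l \<in> edom phi"
        by (intro int_dom_subset_edom positive_entry_in_int_dom[OF in_U])
    qed
    ultimately show ?case by (simp add: forward_min)
  qed
  have "\<forall>i j. ?F$i$j \<in> int_dom" using forward_in_int_dom by blast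
  from has_field_derivative_imp_has_derivative[OF cost_has_derivative[OF this]] local_min
  have "(*) (inner (C + \<gamma> *\<^sub>R dphi_mat ?F) D) = (\<lambda>h. 0)"
    by (rule has_derivative_local_min)
  from fun_cong[OF this, of 1] show ?thesis by simp
qed

lemma forward_kkt: "\<exists>u v. dphi_mat (\<F> C) = (1 / \<gamma>) *\<^sub>R (oplus u v - C)"
proof -
  let ?W = "C + \<gamma> *\<^sub>R dphi_mat (\<F> C)"
  have "\<exists>a b. \<forall>i j. ?W$i$j = a i + b j"
  proof (rule oplus_if_orthogonal_to_zero_margins)
    fix D :: "'n \<Rightarrow> 'n \<Rightarrow> real"
    assume "\<forall>k. (\<Sum>l\<in>UNIV. D k l) = 0" "\<forall>l. (\<Sum>k\<in>UNIV. D k l) = 0"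
    then have "inner ?W (\<chi> k l. D k l) = 0" by (intro forward_stationary) simp_all
    then show "(\<Sum>k\<in>UNIV. \<Sum>l\<in>UNIV. ?W$k$l * D k l) = 0" by (simp add: inner_matrix)
  qed
  then obtain a b where ab: "\<And>i j. ?W$i$j = a i + b j" by blast
  have "dphi_mat (\<F> C) = (1 / \<gamma>) *\<^sub>R (oplus (\<chi> i. a i) (\<chi> j. b j) - C)"
    unfolding vec_eq_iff
  proof (intro allI)
    fix i j
    have "\<gamma> * dphi (\<F> C $i$j) = a i + b j - C$i$j" using ab[of i j] by (simp add: dphi_mat_def)
    then have "dphi (\<F> C $i$j) = (a i + b j - C$i$j) / \<gamma>"
      using gamma_pos by (simp add: eq_divide_eq mult.commute)
    then show "dphi_mat (\<F> C) $i$j = ((1 / \<gamma>) *\<^sub>R (oplus (\<chi> i. a i) (\<chi> j. b j) - C))$i$j"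
      by (simp add: dphi_mat_def oplus_def)
  qed
  then show ?thesis by blast
qed

lemma dual_pair_exists: "\<exists>u v. dual_pair phi \<gamma> \<mu> \<nu> C u v"
proof -
  obtain u v where kkt: "dphi_mat (\<F> C) = (1 / \<gamma>) *\<^sub>R (oplus u v - C)"
    using forward_kkt by blast
  have "(u$i + v$j - C$i$j) / \<gamma> = dphi (\<F> C $i$j)" for i j
    using arg_cong[OF kkt, of "\<lambda>X. X$i$j"] by (simp add: dphi_mat_def oplus_def)
  then have "dual_pair phi \<gamma> \<mu> \<nu> C u v"
    unfolding dual_pair_def Let_def psir_eq
    using fconj_has_derivative_dphi[OF forward_in_int_dom] by simp
  then show ?thesis by blast
qed

(* L(C) of the proof sketch at the top *)
definition dual_loss :: "real^'n^'n \<Rightarrow> real" where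
  "dual_loss C = inner C (Xh - \<F> C) / \<gamma> - phi_sum (\<F> C)"

lemma inner_dual_variable_diff:
  "inner ((1 / \<gamma>) *\<^sub>R (oplus u v - C)) (\<F> C - Xh) = inner C (Xh - \<F> C) / \<gamma>"
proof -
  have "inner (oplus u v) (\<F> C - Xh) = 0"
    by (rule inner_oplus_diff_transport[OF forward_in_U Xh_in_U])
  then have "inner ((1 / \<gamma>) *\<^sub>R (oplus u v - C)) (\<F> C - Xh) = (1 / \<gamma>) * - inner C (\<F> C - Xh)"
    by (simp only: inner_scaleR_left inner_diff_left) simp
  also have "\<dots> = inner C (Xh - \<F> C) / \<gamma>"
    by (simp only: inner_minus_right[symmetric] minus_diff_eq) simp
  finally show ?thesis .
qed

lemma dual_loss_eq:
  "inner ((1 / \<gamma>) *\<^sub>R (oplus u v - C)) (\<F> C) - phi_sum (\<F> C)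
     - inner ((1 / \<gamma>) *\<^sub>R (oplus u v - C)) Xh = dual_loss C"
  using inner_dual_variable_diff[of u v C] unfolding dual_loss_def inner_diff_right by linarith

lemma bregman_div_forward:
  "bregman_div_mat phi dphi Xh (\<F> C) = ereal (phi_sum Xh + dual_loss C)"
proof -
  obtain u v where kkt: "dphi_mat (\<F> C) = (1 / \<gamma>) *\<^sub>R (oplus u v - C)"
    using forward_kkt by blast
  have Xh_dom: "Xh$i$j \<in> edom phi" and F_dom: "\<F> C $i$j \<in> edom phi" for i j
    using positive_entry_in_int_dom[OF Xh_in_U Xh_pos] forward_in_int_dom int_dom_subset_edom by blast+
  have "bregman_div_mat phi dphi Xh (\<F> C)
      = ereal (phi_sum Xh - phi_sum (\<F> C) - inner (Xh - \<F> C) (dphi_mat (\<F> C)))"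
    by (simp add: bregman_div_mat_def bregman_div_def phi_eq_phir[OF Xh_dom] phi_eq_phir[OF F_dom]
        phi_sum_def inner_matrix dphi_mat_def sum_subtractf)
  also have "inner (Xh - \<F> C) (dphi_mat (\<F> C)) = - (inner C (Xh - \<F> C) / \<gamma>)"
    unfolding kkt inner_dual_variable_diff[of u v C, symmetric]
    by (simp only: inner_commute[of "Xh - \<F> C"] inner_minus_right[symmetric] minus_diff_eq)
  finally show ?thesis by (simp add: dual_loss_def)
qed

lemma E_obj_ge_dual_loss: "ereal (dual_loss C) \<le> E_obj phi \<gamma> Xh u v C"
proof -
  let ?Z = "(1 / \<gamma>) *\<^sub>R (oplus u v - C)"
  have "\<forall>i j. \<F> C $i$j \<in> edom phi" using forward_in_int_dom int_dom_subset_edom by blast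
  then have "ereal (inner ?Z (\<F> C) - phi_sum (\<F> C)) - ereal (inner ?Z Xh) \<le> E_obj phi \<gamma> Xh u v C"
    unfolding E_obj_def by (intro ereal_minus_mono fenchel_young_mat) simp_all
  then show ?thesis
    unfolding ereal_minus(1) dual_loss_eq .
qed

lemma E_obj_dual_pair:
  assumes "dual_pair phi \<gamma> \<mu> \<nu> C u v"
  shows "E_obj phi \<gamma> Xh u v C = ereal (dual_loss C)"
proof -
  let ?Z = "(1 / \<gamma>) *\<^sub>R (oplus u v - C)"
  have "\<forall>i j. ?Z$i$j \<in> interior (edom psi) \<and> (psir has_real_derivative \<F> C $i$j) (at (?Z$i$j))"
    using assms unfolding dual_pair_def Let_def psir_eq by (simp add: oplus_def divide_inverse mult.commute)
  then have "mat_sum psi ?Z = ereal (inner ?Z (\<F> C) - phi_sum (\<F> C))"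
    using forward_in_int_dom by (intro fenchel_young_mat_eq) auto
  then show ?thesis
    unfolding E_obj_def by (simp only: ereal_minus(1) dual_loss_eq)
qed

lemma solves_P1_iff:
  "solves_P1 phi dphi \<gamma> \<mu> \<nu> \<C> Xh C \<longleftrightarrow> C \<in> \<C> \<and> (\<forall>C'\<in>\<C>. dual_loss C \<le> dual_loss C')"
  by (simp add: solves_P1_def bregman_div_forward)

lemma solves_P1_if_solves_P2:
  assumes "solves_P2 phi \<gamma> \<C> Xh u v C"
  shows "solves_P1 phi dphi \<gamma> \<mu> \<nu> \<C> Xh C"
  unfolding solves_P1_iff
proof (intro conjI ballI)
  show "C \<in> \<C>" using assms unfolding solves_P2_def by blast
  fix C' assume "C' \<in> \<C>"
  obtain u' v' where "dual_pair phi \<gamma> \<mu> \<nu> C' u' v'" using dual_pair_exists by blast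
  have "ereal (dual_loss C) \<le> E_obj phi \<gamma> Xh u v C" by (rule E_obj_ge_dual_loss)
  also have "\<dots> \<le> E_obj phi \<gamma> Xh u' v' C'" using assms \<open>C' \<in> \<C>\<close> unfolding solves_P2_def by blast
  also have "\<dots> = ereal (dual_loss C')" by (rule E_obj_dual_pair) fact
  finally show "dual_loss C \<le> dual_loss C'" by simp
qed

lemma solves_P2_if_solves_P1:
  assumes "solves_P1 phi dphi \<gamma> \<mu> \<nu> \<C> Xh C" and "dual_pair phi \<gamma> \<mu> \<nu> C u v"
  shows "solves_P2 phi \<gamma> \<C> Xh u v C"
  unfolding solves_P2_def
proof (intro conjI ballI allI)
  show "C \<in> \<C>" using assms(1) unfolding solves_P1_iff by blast
  fix C' u' v' assume "C' \<in> \<C>"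
  have "E_obj phi \<gamma> Xh u v C = ereal (dual_loss C)" by (rule E_obj_dual_pair[OF assms(2)])
  also have "\<dots> \<le> ereal (dual_loss C')" using assms(1) \<open>C' \<in> \<C>\<close> unfolding solves_P1_iff by simp
  also have "\<dots> \<le> E_obj phi \<gamma> Xh u' v' C'" by (rule E_obj_ge_dual_loss)
  finally show "E_obj phi \<gamma> Xh u v C \<le> E_obj phi \<gamma> Xh u' v' C'" .
qed

end

theorem proposition6:
  fixes \<mu> \<nu> :: "real^'n"
    and \<gamma> :: real
    and phi :: "real \<Rightarrow> ereal" and dphi :: "real \<Rightarrow> real"
    and \<C> :: "(real^'n^'n) set"
    and Xh :: "real^'n^'n"
  assumes "prob_vec \<mu>" and "prob_vec \<nu>" and "\<gamma> > 0"
    and "bregman_assumption phi dphi" and "dphi0_neg_inf dphi"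
    and "\<C> \<noteq> {}" and "closed \<C>" and "convex \<C>"
    and "Xh \<in> T_phi dphi \<mu> \<nu>"
  shows "((\<exists>C. solves_P1 phi dphi \<gamma> \<mu> \<nu> \<C> Xh C) \<longleftrightarrow> (\<exists>u v C. solves_P2 phi \<gamma> \<C> Xh u v C))
       \<and> ((\<exists>C. solves_P1 phi dphi \<gamma> \<mu> \<nu> \<C> Xh C) \<and> (\<exists>u v C. solves_P2 phi \<gamma> \<C> Xh u v C) \<longrightarrow>
          (\<forall>C\<in>\<C>. \<forall>u v. dual_pair phi \<gamma> \<mu> \<nu> C u v \<longrightarrow>
              (solves_P1 phi dphi \<gamma> \<mu> \<nu> \<C> Xh C \<longleftrightarrow> solves_P2 phi \<gamma> \<C> Xh u v C)))"
proof -
  interpret forward_problem phi dphi \<mu> \<nu> \<gamma> Xh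
    using assms by unfold_locales
  show ?thesis
    using solves_P1_if_solves_P2 solves_P2_if_solves_P1 dual_pair_exists by meson
qed

end
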